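(* Consider the quadratic infinite-horizon dynamic multi-agent system described in the context. Suppose $(\mathbf A,\mathbf B)$ is controllable and there is $C>0$ with $C(t)\ge C$ for all $t\ge0$. Let $\mathbf P$ be the symmetric positive definite (stabilizing) solution of the discrete algebraic Riccati equation $\mathbf P=\mathbf A^\top\mathbf P\mathbf A+\mathbf Q-\mathbf A^\top\mathbf P\mathbf B(\mathbf B^\top\mathbf P\mathbf B+\mathbf R)^{-1}\mathbf B^\top\mathbf P\mathbf A$, let $\mathbf K=-(\mathbf R+\mathbf B^\top\mathbf P\mathbf B)^{-1}\mathbf B^\top\mathbf P\mathbf A$, assume $\mathbf K^\top\mathbf H\mathbf K\neq0$, and set $$\mathbb X_0=\Big\{\mathbf x(0)\in\mathbb R^{nd}:\ \|\mathbf x(0)\|^2\le\frac{C\,\sigma_{\min}(\mathbf P)}{\sigma_{\max}(\mathbf P)\,\sigma_{\max}(\mathbf K^\top\mathbf H\mathbf K)}\Big\}.$$ If $\mathbf x(0)\in\mathbb X_0$, then: (i) the infinite-horizon social welfare maximization problem is feasible and its optimal control input is given by the linear feedback $\mathbf u^\ast(t)=\mathbf K\mathbf x(t)$ for all $t\ge0$; (ii) there is an infinite-horizon competitive equilibrium whose price sequence is $\lambda^\ast_t=0$ for all $t\ge0$ (with control inputs given by this feedback).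
   Context: Quadratic infinite-horizon dynamic multi-agent system: $n$ agents $\mathcal V=\{1,\dots,n\}$, times $t=0,1,2,\dots$; agent $i$ has state $\mathbf x_i(t)\in\mathbb R^d$, input $\mathbf u_i(t)\in\mathbb R^m$, dynamics $\mathbf x_i(t+1)=\mathbf A_i\mathbf x_i(t)+\mathbf B_i\mathbf u_i(t)$, utility $f_i(\mathbf x,\mathbf u)=-\mathbf x^\top\mathbf Q_i\mathbf x-\mathbf u^\top\mathbf R_i\mathbf u$ and consumption $h_i(\mathbf u)=\mathbf u^\top\mathbf H_i\mathbf u$ with $\mathbf Q_i,\mathbf R_i,\mathbf H_i$ symmetric positive definite; excess resources $a_i(t)\in\mathbb R$, $C(t)=\sum_ia_i(t)$; traded resources $e_i(t)\in\mathbb R$. Stacked quantities: $\mathbf x(t)=(\mathbf x_1(t),\dots,\mathbf x_n(t))$, $\mathbf u(t)=(\mathbf u_1(t),\dots,\mathbf u_n(t))$, $\mathbf A=\mathrm{blockdiag}(\mathbf A_i)$, $\mathbf B=\mathrm{blockdiag}(\mathbf B_i)$, $\mathbf Q=\mathrm{blockdiag}(\mathbf Q_i)$, $\mathbf R=\mathrm{blockdiag}(\mathbf R_i)$, $\mathbf H=\mathrm{blockdiag}(\mathbf H_i)$. $\sigma_{\min},\sigma_{\max}$ denote smallest and largest eigenvalues of a symmetric matrix. An infinite-horizon competitive equilibrium for $\mathbf x(0)$ is a triple $(\boldsymbol\lambda^\ast,\mathbf U^\ast,\mathbf E^\ast)$, $\boldsymbol\lambda^\ast=(\lambda^\ast_t)_{t\ge0}$,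 such that (i) for each $i$, $((\mathbf u_i^\ast(t))_t,(e_i^\ast(t))_t)$ attains a finite maximum of $\sum_{t=0}^\infty[f_i(\mathbf x_i(t),\mathbf u_i(t))+\lambda^\ast_te_i(t)]$ subject to the dynamics and $e_i(t)\le a_i(t)-h_i(\mathbf u_i(t))$ for all $t$; (ii) $\sum_{i=1}^ne_i^\ast(t)=0$ for all $t$. The infinite-horizon social welfare maximization problem for $\mathbf x(0)$: maximize $\sum_{i=1}^n\sum_{t=0}^\infty f_i(\mathbf x_i(t),\mathbf u_i(t))$ over all inputs and trades subject to the dynamics, $e_i(t)\le a_i(t)-h_i(\mathbf u_i(t))$ and $\sum_{i=1}^ne_i(t)=0$ for all $t\ge0$; it is feasible if it has an admissible point and a finite optimal value. *)

theory Defs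
  imports "HOL-Analysis.Analysis" "HOL-Library.Liminf_Limsup"
begin

text \<open>Agents are indexed by the finite type 'i (n = CARD('i)), agent states by
 the finite type 'd (d = CARD('d)), agent inputs by the finite type 'c (m = CARD('c)).
 Stacked vectors live in real^('i \<times> 'd) resp. real^('i \<times> 'c).\<close>

definition blockdiag :: "('i::finite \<Rightarrow> real^'b::finite^'a::finite) \<Rightarrow> real^('i \<times> 'b)^('i \<times> 'a)" where
  "blockdiag M = (\<chi> p q. if fst p = fst q then M (fst p) $ snd p $ snd q else 0)"

definition comp :: "real^('i::finite \<times> 'k::finite) \<Rightarrow> 'i \<Rightarrow> real^'k" where
  "comp v i = (\<chi> k. v $ (i,k))"

fun mpow :: "real^'n::finite^'n \<Rightarrow> nat \<Rightarrow> real^'n^'n" where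
  "mpow A 0 = mat 1"
| "mpow A (Suc k) = A ** mpow A k"

fun traj :: "real^'n::finite^'n \<Rightarrow> real^'m::finite^'n \<Rightarrow> real^'n \<Rightarrow> (nat \<Rightarrow> real^'m) \<Rightarrow> nat \<Rightarrow> real^'n" where
  "traj A B x0 u 0 = x0"
| "traj A B x0 u (Suc t) = A *v traj A B x0 u t + B *v u t"

text \<open>(A,B) controllable: the Kalman matrix [B, AB, ..., A^(N-1) B] has rank N,
 i.e. its columns span R^N (N = CARD('n)).\<close>
definition controllable :: "real^'n::finite^'n \<Rightarrow> real^'m::finite^'n \<Rightarrow> bool" where
  "controllable A B \<longleftrightarrow> span (\<Union>k<CARD('n). columns (mpow A k ** B)) = UNIV"

definition sym_pos_def :: "real^'n::finite^'n \<Rightarrow> bool" where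
  "sym_pos_def M \<longleftrightarrow> transpose M = M \<and> (\<forall>v. v \<noteq> 0 \<longrightarrow> 0 < v \<bullet> (M *v v))"

definition eigenvalues :: "real^'n::finite^'n \<Rightarrow> real set" where
  "eigenvalues M = {lam. \<exists>v. v \<noteq> 0 \<and> M *v v = lam *\<^sub>R v}"

definition sigma_min :: "real^'n::finite^'n \<Rightarrow> real" where
  "sigma_min M = Min (eigenvalues M)"

definition sigma_max :: "real^'n::finite^'n \<Rightarrow> real" where
  "sigma_max M = Max (eigenvalues M)"

definition util :: "real^'d::finite^'d \<Rightarrow> real^'c::finite^'c \<Rightarrow> real^'d \<Rightarrow> real^'c \<Rightarrow> real" where
  "util Q R x u = - (x \<bullet> (Q *v x)) - (u \<bullet> (R *v u))"

definition cons :: "real^'c::finite^'c \<Rightarrow> real^'c \<Rightarrow> real" where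
  "cons H u = u \<bullet> (H *v u)"

text \<open>Extended-real value of an infinite series (limsup of partial sums); equals the
 usual sum for summable series, +/- infinity for series diverging to +/- infinity.\<close>
definition series_val :: "(nat \<Rightarrow> real) \<Rightarrow> ereal" where
  "series_val g = limsup (\<lambda>N. ereal (\<Sum>t<N. g t))"

definition swm_admissible ::
  "('i::finite \<Rightarrow> real^'c::finite^'c) \<Rightarrow> ('i \<Rightarrow> nat \<Rightarrow> real)
   \<Rightarrow> (nat \<Rightarrow> real^('i \<times> 'c)) \<Rightarrow> ('i \<Rightarrow> nat \<Rightarrow> real) \<Rightarrow> bool" where
  "swm_admissible Hi a u e \<longleftrightarrow>
     (\<forall>t. (\<forall>i. e i t \<le> a i t - cons (Hi i) (comp (u t) i)) \<and> (\<Sum>i\<in>UNIV. e i t) = 0)"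

definition swm_stage ::
  "('i::finite \<Rightarrow> real^'d::finite^'d) \<Rightarrow> ('i \<Rightarrow> real^'c::finite^'d)
   \<Rightarrow> ('i \<Rightarrow> real^'d^'d) \<Rightarrow> ('i \<Rightarrow> real^'c^'c)
   \<Rightarrow> real^('i \<times> 'd) \<Rightarrow> (nat \<Rightarrow> real^('i \<times> 'c)) \<Rightarrow> nat \<Rightarrow> real" where
  "swm_stage Ai Bi Qi Ri x0 u t =
     (\<Sum>i\<in>UNIV. util (Qi i) (Ri i)
        (comp (traj (blockdiag Ai) (blockdiag Bi) x0 u t) i) (comp (u t) i))"

definition swm_value where
  "swm_value Ai Bi Qi Ri Hi a x0 =
     (SUP ue \<in> {(u,e). swm_admissible Hi a u e}. series_val (swm_stage Ai Bi Qi Ri x0 (fst ue)))"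

definition swm_feasible where
  "swm_feasible Ai Bi Qi Ri Hi a x0 \<longleftrightarrow>
     (\<exists>u e. swm_admissible Hi a u e) \<and> \<bar>swm_value Ai Bi Qi Ri Hi a x0\<bar> \<noteq> \<infinity>"

definition swm_optimal_input where
  "swm_optimal_input Ai Bi Qi Ri Hi a x0 u \<longleftrightarrow>
     (\<exists>e. swm_admissible Hi a u e \<and> summable (swm_stage Ai Bi Qi Ri x0 u) \<and>
        (\<forall>u' e'. swm_admissible Hi a u' e' \<longrightarrow>
           series_val (swm_stage Ai Bi Qi Ri x0 u') \<le> ereal (suminf (swm_stage Ai Bi Qi Ri x0 u))))"

definition agent_feasible :: "real^'c::finite^'c \<Rightarrow> (nat \<Rightarrow> real) \<Rightarrow> (nat \<Rightarrow> real^'c) \<Rightarrow> (nat \<Rightarrow> real) \<Rightarrow> bool" where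
  "agent_feasible H ai ui ei \<longleftrightarrow> (\<forall>t. ei t \<le> ai t - cons H (ui t))"

definition agent_stage ::
  "real^'d::finite^'d \<Rightarrow> real^'c::finite^'d \<Rightarrow> real^'d^'d \<Rightarrow> real^'c^'c
   \<Rightarrow> real^'d \<Rightarrow> (nat \<Rightarrow> real) \<Rightarrow> (nat \<Rightarrow> real^'c) \<Rightarrow> (nat \<Rightarrow> real) \<Rightarrow> nat \<Rightarrow> real" where
  "agent_stage A B Q R xi0 lam ui ei t = util Q R (traj A B xi0 ui t) (ui t) + lam t * ei t"

definition agent_optimal where
  "agent_optimal A B Q R H ai xi0 lam ui ei \<longleftrightarrow>
     agent_feasible H ai ui ei \<and> summable (agent_stage A B Q R xi0 lam ui ei) \<and>
     (\<forall>u e. agent_feasible H ai u e \<longrightarrow>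
        series_val (agent_stage A B Q R xi0 lam u e) \<le> ereal (suminf (agent_stage A B Q R xi0 lam ui ei)))"

definition competitive_equilibrium ::
  "('i::finite \<Rightarrow> real^'d::finite^'d) \<Rightarrow> ('i \<Rightarrow> real^'c::finite^'d)
   \<Rightarrow> ('i \<Rightarrow> real^'d^'d) \<Rightarrow> ('i \<Rightarrow> real^'c^'c) \<Rightarrow> ('i \<Rightarrow> real^'c^'c)
   \<Rightarrow> ('i \<Rightarrow> nat \<Rightarrow> real) \<Rightarrow> real^('i \<times> 'd)
   \<Rightarrow> (nat \<Rightarrow> real) \<Rightarrow> ('i \<Rightarrow> nat \<Rightarrow> real^'c) \<Rightarrow> ('i \<Rightarrow> nat \<Rightarrow> real) \<Rightarrow> bool" where
  "competitive_equilibrium Ai Bi Qi Ri Hi a x0 lam U E \<longleftrightarrow>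
     (\<forall>i. agent_optimal (Ai i) (Bi i) (Qi i) (Ri i) (Hi i) (a i) (comp x0 i) lam (U i) (E i)) \<and>
     (\<forall>t. (\<Sum>i\<in>UNIV. E i t) = 0)"

end

theory Submission
  imports Defs
begin

text \<open>The Riccati equation makes the value function V x = x' P x satisfy a completion of
 squares: the stage cost equals V(x(t)) - V(x(t+1)) plus a nonnegative quadratic in the
 deviation u(t) - K x(t). Telescoping, every input with finite cost costs at least V(x(0)),
 and the feedback u = K x attains exactly V(x(0)), so it maximizes welfare. Along the
 feedback V is nonincreasing, which on X_0 bounds the total consumption u' H u by
 C \<le> sum_i a_i(t); splitting the surplus equally gives balanced trades. Since dynamics and
 costs decouple across agents, a social optimum is also optimal for each agent on its own,
 so at zero prices the same inputs and trades form a competitive equilibrium.\<close>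

section \<open>Matrices, quadratic forms and extreme eigenvalues\<close>

lemma transpose_add: "transpose (A + B) = transpose A + transpose (B::'a::semiring_1^'n^'m)"
  by (simp add: transpose_def vec_eq_iff)

lemma transpose_diff: "transpose (A - B) = transpose A - transpose (B::'a::ring_1^'n^'m)"
  by (simp add: transpose_def vec_eq_iff)

lemma transpose_uminus: "transpose (- A) = - transpose (A::'a::ring_1^'n^'m)"
  by (simp add: transpose_def vec_eq_iff)

lemma matrix_vector_mult_uminus: "(- A) *v x = - (A *v x)" for A :: "'a::ring_1^'n^'m"
  by (simp add: matrix_vector_mult_def vec_eq_iff sum_negf)

lemma matrix_vector_mult_uminus_right: "A *v (- x) = - (A *v x)" for A :: "'a::ring_1^'n^'m"
  by (simp add: matrix_vector_mult_def vec_eq_iff sum_negf)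

lemma inner_transpose_matrix_vector:
  "x \<bullet> (transpose A *v z) = (A *v x) \<bullet> z" for A :: "real^'n^'m"
proof -
  have "x \<bullet> (transpose A *v z) = (z v* A) \<bullet> x"
    unfolding transpose_matrix_vector by (rule inner_commute)
  also have "\<dots> = z \<bullet> (A *v x)" by (rule dot_lmul_matrix)
  also have "\<dots> = (A *v x) \<bullet> z" by (rule inner_commute)
  finally show ?thesis .
qed

lemma symmetric_matrix_inner:
  fixes S :: "real^'n^'n"
  assumes "transpose S = S"
  shows "(S *v x) \<bullet> y = x \<bullet> (S *v y)"
  by (subst inner_transpose_matrix_vector[symmetric]) (simp only: assms)

lemma psd_quadratic_form_zero_imp_null:
  fixes T :: "real^'n^'n"
  assumes sym: "transpose T = T" and psd: "\<And>x. 0 \<le> x \<bullet> (T *v x)" and v: "v \<bullet> (T *v v) = 0"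
  shows "T *v v = 0"
proof (rule ccontr)
  assume "T *v v \<noteq> 0"
  define w where "w = T *v v"
  define q where "q = w \<bullet> (T *v w)"
  define s where "s = (w \<bullet> w) / (q + 1)"
  have q: "q \<ge> 0" using psd q_def by auto
  have ww: "w \<bullet> w > 0" using \<open>T *v v \<noteq> 0\<close> w_def by auto
  have s: "s > 0" using ww q s_def by auto
  have vw: "v \<bullet> (T *v w) = w \<bullet> w"
    using symmetric_matrix_inner[OF sym, of v w] w_def by (simp add: inner_commute)
  \<comment> \<open>along v - s w the form would become negative\<close>
  have "0 \<le> (v - s *\<^sub>R w) \<bullet> (T *v (v - s *\<^sub>R w))" by (rule psd)
  also have "\<dots> = v \<bullet> (T *v v) - s * (w \<bullet> (T *v v)) - s * (v \<bullet> (T *v w)) + s * s * (w \<bullet> (T *v w))"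
    by (simp add: matrix_vector_mult_diff_distrib matrix_vector_mult_scaleR inner_diff_left
        inner_diff_right algebra_simps)
  also have "\<dots> = - 2 * s * (w \<bullet> w) + s\<^sup>2 * q"
    using v vw by (simp add: q_def w_def power2_eq_square)
  finally have "s * (2 * (w \<bullet> w)) \<le> s * (s * q)" by (simp add: power2_eq_square algebra_simps)
  then have "2 * (w \<bullet> w) \<le> s * q" using s by simp
  moreover have "s * q < w \<bullet> w" unfolding s_def using ww q by (simp add: field_simps)
  ultimately show False using ww by simp
qed

lemma symmetric_matrix_max_eigenvalue:
  fixes S :: "real^'n^'n"
  assumes sym: "transpose S = S"
  shows "\<exists>m\<in>eigenvalues S. \<forall>x. x \<bullet> (S *v x) \<le> m * (norm x)\<^sup>2"
proof -
  obtain b :: "real^'n" where "b \<in> Basis" using nonempty_Basis by blast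
  then have "sphere (0::real^'n) 1 \<noteq> {}" by (auto intro!: exI[of _ b])
  moreover have "continuous_on (sphere 0 1) (\<lambda>x::real^'n. x \<bullet> (S *v x))"
    by (intro continuous_intros linear_continuous_on matrix_vector_mul_bounded_linear)
  ultimately obtain v where v: "v \<in> sphere 0 1"
    and v_max: "\<And>y. y \<in> sphere 0 1 \<Longrightarrow> y \<bullet> (S *v y) \<le> v \<bullet> (S *v v)"
    using continuous_attains_sup[OF compact_sphere] by blast
  define m where "m = v \<bullet> (S *v v)"
  have bound: "x \<bullet> (S *v x) \<le> m * (norm x)\<^sup>2" for x
  proof (cases "x = 0")
    case False
    define y where "y = (1 / norm x) *\<^sub>R x"
    have "y \<in> sphere 0 1" using False y_def by auto
    then have "y \<bullet> (S *v y) \<le> m" using v_max m_def by blast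
    moreover have "y \<bullet> (S *v y) = (x \<bullet> (S *v x)) / (norm x)\<^sup>2"
      using False by (simp add: y_def matrix_vector_mult_scaleR power2_eq_square)
    ultimately show ?thesis using False by (simp add: field_simps)
  qed simp
  \<comment> \<open>m I - S is positive semidefinite and its form vanishes at v, so v is an eigenvector\<close>
  have "norm v = 1" using v by simp
  define T where "T = m *\<^sub>R mat 1 - S"
  have Tv: "T *v x = m *\<^sub>R x - S *v x" for x
    by (simp add: T_def matrix_vector_mult_diff_rdistrib flip: scaleR_matrix_vector_assoc)
  have "transpose T = T" using sym by (simp add: T_def transpose_diff transpose_scalar)
  moreover have "0 \<le> x \<bullet> (T *v x)" for x
    using bound[of x] by (simp add: Tv inner_diff_right dot_square_norm)
  moreover have "v \<bullet> (T *v v) = 0"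
    using \<open>norm v = 1\<close> by (simp add: Tv inner_diff_right dot_square_norm m_def)
  ultimately have "T *v v = 0" by (rule psd_quadratic_form_zero_imp_null)
  then have "S *v v = m *\<^sub>R v" using Tv by simp
  then have "m \<in> eigenvalues S"
    using \<open>norm v = 1\<close> by (auto simp: eigenvalues_def intro!: exI[of _ v])
  with bound show ?thesis by blast
qed

lemma finite_eigenvalues_symmetric:
  fixes S :: "real^'n^'n"
  assumes sym: "transpose S = S"
  shows "finite (eigenvalues S)"
proof -
  define g where "g l = (SOME v. v \<noteq> 0 \<and> S *v v = l *\<^sub>R v)" for l
  have g: "g l \<noteq> 0 \<and> S *v g l = l *\<^sub>R g l" if "l \<in> eigenvalues S" for l
    unfolding g_def by (rule someI_ex) (use that in \<open>auto simp: eigenvalues_def\<close>)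
  have inj: "inj_on g (eigenvalues S)"
  proof (rule inj_onI)
    fix l k assume l: "l \<in> eigenvalues S" and k: "k \<in> eigenvalues S" and "g l = g k"
    then have "l *\<^sub>R g l = k *\<^sub>R g l" using g[OF l] g[OF k] by metis
    then show "l = k" using g[OF l] by simp
  qed
  have "pairwise orthogonal (g ` eigenvalues S)"
  proof (clarsimp simp: pairwise_def)
    fix l k assume l: "l \<in> eigenvalues S" and k: "k \<in> eigenvalues S" and "g l \<noteq> g k"
    then have "l \<noteq> k" by auto
    have "l * (g l \<bullet> g k) = (S *v g l) \<bullet> g k" using g[OF l] by simp
    also have "\<dots> = g l \<bullet> (S *v g k)" by (rule symmetric_matrix_inner[OF sym])
    also have "\<dots> = k * (g l \<bullet> g k)" using g[OF k] by simp
    finally show "orthogonal (g l) (g k)" using \<open>l \<noteq> k\<close> by (simp add: orthogonal_def)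
  qed
  moreover have "0 \<notin> g ` eigenvalues S" using g by auto
  ultimately have "finite (g ` eigenvalues S)"
    by (intro independent_imp_finite pairwise_orthogonal_independent)
  then show ?thesis using finite_imageD[OF _ inj] by blast
qed

lemma eigenvalue_le_quadratic_bound:
  fixes S :: "real^'n^'n"
  assumes "l \<in> eigenvalues S" and bound: "\<And>x. x \<bullet> (S *v x) \<le> m * (norm x)\<^sup>2"
  shows "l \<le> m"
proof -
  obtain v where v: "v \<noteq> 0" "S *v v = l *\<^sub>R v" using assms(1) unfolding eigenvalues_def by blast
  have "l * (norm v)\<^sup>2 \<le> m * (norm v)\<^sup>2" using bound[of v] v(2) by (simp add: dot_square_norm)
  then show ?thesis using v(1) by simp
qed

lemma sigma_max_symmetric:
  fixes S :: "real^'n^'n"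
  assumes sym: "transpose S = S"
  shows "sigma_max S \<in> eigenvalues S" and "x \<bullet> (S *v x) \<le> sigma_max S * (norm x)\<^sup>2"
proof -
  obtain m where m: "m \<in> eigenvalues S" and bound: "\<And>x. x \<bullet> (S *v x) \<le> m * (norm x)\<^sup>2"
    using symmetric_matrix_max_eigenvalue[OF sym] by blast
  have "sigma_max S = m"
    unfolding sigma_max_def
    by (rule Max_eqI[OF finite_eigenvalues_symmetric[OF sym] eigenvalue_le_quadratic_bound m])
      (use bound in blast)+
  then show "sigma_max S \<in> eigenvalues S" and "x \<bullet> (S *v x) \<le> sigma_max S * (norm x)\<^sup>2"
    using m bound by simp_all
qed

lemma eigenvalues_uminus_iff: "- l \<in> eigenvalues (- S) \<longleftrightarrow> l \<in> eigenvalues S"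
proof -
  have "(- S) *v v = (- l) *\<^sub>R v \<longleftrightarrow> S *v v = l *\<^sub>R v" for v
    by (metis matrix_vector_mult_uminus neg_equal_iff_equal scaleR_minus_left)
  then show ?thesis unfolding eigenvalues_def by simp
qed

lemma sigma_min_symmetric:
  fixes S :: "real^'n^'n"
  assumes sym: "transpose S = S"
  shows "sigma_min S \<in> eigenvalues S" and "sigma_min S * (norm x)\<^sup>2 \<le> x \<bullet> (S *v x)"
proof -
  define m where "m = - sigma_max (- S)"
  have sym': "transpose (- S) = - S" using sym by (simp add: transpose_uminus)
  have m: "m \<in> eigenvalues S"
    using sigma_max_symmetric(1)[OF sym'] eigenvalues_uminus_iff[of m S] by (simp add: m_def)
  have bound: "m * (norm y)\<^sup>2 \<le> y \<bullet> (S *v y)" for y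
    using sigma_max_symmetric(2)[OF sym', of y] by (simp add: m_def matrix_vector_mult_uminus)
  have "m \<le> l" if "l \<in> eigenvalues S" for l
    using eigenvalue_le_quadratic_bound[OF _ sigma_max_symmetric(2)[OF sym'], of "- l"]
      eigenvalues_uminus_iff[of l S] that by (simp add: m_def)
  then have "sigma_min S = m"
    unfolding sigma_min_def by (rule Min_eqI[OF finite_eigenvalues_symmetric[OF sym] _ m])
  then show "sigma_min S \<in> eigenvalues S" and "sigma_min S * (norm x)\<^sup>2 \<le> x \<bullet> (S *v x)"
    using m bound by simp_all
qed

lemma sym_pos_def_psd: "sym_pos_def S \<Longrightarrow> 0 \<le> x \<bullet> (S *v x)"
  unfolding sym_pos_def_def by (cases "x = 0") auto

lemma sym_pos_def_eigenvalue_pos: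
  assumes "sym_pos_def S" and "l \<in> eigenvalues S"
  shows "l > 0"
proof -
  obtain v where v: "v \<noteq> 0" "S *v v = l *\<^sub>R v" using assms(2) unfolding eigenvalues_def by blast
  have "0 < v \<bullet> (S *v v)" using assms(1) v(1) unfolding sym_pos_def_def by blast
  with v show ?thesis by (simp add: dot_square_norm zero_less_mult_iff)
qed

lemma sigma_min_pos: "sym_pos_def S \<Longrightarrow> 0 < sigma_min S"
  using sigma_min_symmetric(1) sym_pos_def_eigenvalue_pos sym_pos_def_def by blast

lemma sigma_max_pos: "sym_pos_def S \<Longrightarrow> 0 < sigma_max S"
  using sigma_max_symmetric(1) sym_pos_def_eigenvalue_pos sym_pos_def_def by blast

section \<open>Values of series\<close>

lemma series_val_eq_suminf: "summable g \<Longrightarrow> series_val g = ereal (suminf g)"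
  unfolding series_val_def by (rule lim_imp_Limsup) (simp_all add: summable_LIMSEQ)

text \<open>If c is not summable, its partial sums eventually exceed L, which bounds the limsup.\<close>

lemma series_val_uminus_le:
  fixes c :: "nat \<Rightarrow> real"
  assumes c: "\<And>t. 0 \<le> c t" and L: "summable c \<Longrightarrow> L \<le> suminf c"
  shows "series_val (\<lambda>t. - c t) \<le> ereal (- L)"
proof (cases "summable c")
  case True
  then show ?thesis
    using L series_val_eq_suminf[OF summable_minus[OF True]] suminf_minus[OF True] by simp
next
  case False
  obtain N where N: "L < (\<Sum>t<N. c t)"
    using False summableI_nonneg_bounded[of c L] c by (meson not_le)
  have "\<forall>\<^sub>F n in sequentially. ereal (\<Sum>t<n. - c t) \<le> ereal (- L)"
  proof (rule eventually_sequentiallyI[of N])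
    fix n assume "N \<le> n"
    then have "(\<Sum>t<N. c t) \<le> (\<Sum>t<n. c t)" by (intro sum_mono2) (auto intro: c)
    then show "ereal (\<Sum>t<n. - c t) \<le> ereal (- L)" using N by (simp add: sum_negf)
  qed
  then show ?thesis unfolding series_val_def by (rule Limsup_bounded)
qed

section \<open>Block-diagonal systems\<close>

lemma sum_UNIV_prod:
  "(\<Sum>p\<in>UNIV. f p) = (\<Sum>i\<in>UNIV. \<Sum>k\<in>UNIV. f (i, k))"
  for f :: "'a::finite \<times> 'b::finite \<Rightarrow> 'c::comm_monoid_add"
  by (simp add: sum.cartesian_product flip: UNIV_Times_UNIV)

lemma inner_eq_sum_comp: "x \<bullet> y = (\<Sum>i\<in>UNIV. comp x i \<bullet> comp y i)"
  for x y :: "real^('i::finite \<times> 'k::finite)"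
  by (simp add: inner_vec_def comp_def sum_UNIV_prod)

lemma comp_add: "comp (x + y) i = comp x i + comp y i"
  by (simp add: comp_def vec_eq_iff)

lemma comp_blockdiag_mult: "comp (blockdiag M *v y) i = M i *v comp y i"
proof -
  have "(blockdiag M *v y) $ (i, k) = (\<Sum>b\<in>UNIV. M i $ k $ b * y $ (i, b))" for k
  proof -
    have "(blockdiag M *v y) $ (i, k)
        = (\<Sum>j\<in>UNIV. \<Sum>b\<in>UNIV. (if i = j then M i $ k $ b else 0) * y $ (j, b))"
      by (simp add: matrix_vector_mult_def blockdiag_def sum_UNIV_prod) (intro sum.cong refl, auto)
    also have "\<dots> = (\<Sum>j\<in>UNIV. if i = j then \<Sum>b\<in>UNIV. M i $ k $ b * y $ (j, b) else 0)"
      by (intro sum.cong) auto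
    finally show ?thesis by simp
  qed
  then show ?thesis by (simp add: comp_def matrix_vector_mult_def vec_eq_iff)
qed

lemma inner_blockdiag: "x \<bullet> (blockdiag M *v y) = (\<Sum>i\<in>UNIV. comp x i \<bullet> (M i *v comp y i))"
  by (simp add: inner_eq_sum_comp[of x] comp_blockdiag_mult)

lemma transpose_blockdiag: "transpose (blockdiag M) = blockdiag (\<lambda>i. transpose (M i))"
  by (auto simp: transpose_def blockdiag_def vec_eq_iff)

lemma comp_traj_blockdiag:
  "comp (traj (blockdiag A) (blockdiag B) x0 u t) i
   = traj (A i) (B i) (comp x0 i) (\<lambda>t. comp (u t) i) t"
  by (induction t) (simp_all add: comp_add comp_blockdiag_mult)

lemma sym_pos_def_blockdiag:
  assumes pd: "\<And>i. sym_pos_def (M i)"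
  shows "sym_pos_def (blockdiag M)"
  unfolding sym_pos_def_def
proof (intro conjI allI impI)
  show "transpose (blockdiag M) = blockdiag M"
    using pd by (simp add: transpose_blockdiag sym_pos_def_def)
  fix x :: "real^('a \<times> 'b)" assume "x \<noteq> 0"
  then obtain i where i: "comp x i \<noteq> 0" by (auto simp: comp_def vec_eq_iff)
  have "0 < comp x i \<bullet> (M i *v comp x i)" using pd[of i] i unfolding sym_pos_def_def by blast
  also have "\<dots> \<le> (\<Sum>j\<in>UNIV. comp x j \<bullet> (M j *v comp x j))"
    by (rule member_le_sum) (auto intro: sym_pos_def_psd pd)
  finally show "0 < x \<bullet> (blockdiag M *v x)" unfolding inner_blockdiag .
qed

section \<open>Linear-quadratic regulation\<close>

definition stage_cost ::
  "real^'n::finite^'n \<Rightarrow> real^'m::finite^'n \<Rightarrow> real^'n^'n \<Rightarrow> real^'m^'m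
   \<Rightarrow> real^'n \<Rightarrow> (nat \<Rightarrow> real^'m) \<Rightarrow> nat \<Rightarrow> real" where
  "stage_cost A B Q R x0 u t = traj A B x0 u t \<bullet> (Q *v traj A B x0 u t) + u t \<bullet> (R *v u t)"

definition feedback_input ::
  "real^'n::finite^'n \<Rightarrow> real^'m::finite^'n \<Rightarrow> real^'n^'m \<Rightarrow> real^'n
   \<Rightarrow> nat \<Rightarrow> real^'m" where
  "feedback_input A B K x0 t = K *v traj (A + B ** K) B x0 (\<lambda>_. 0) t"

lemma stage_cost_nonneg: "sym_pos_def Q \<Longrightarrow> sym_pos_def R \<Longrightarrow> 0 \<le> stage_cost A B Q R x0 u t"
  unfolding stage_cost_def by (simp add: add_nonneg_nonneg sym_pos_def_psd)

lemma traj_feedback_input: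
  "traj A B x0 (feedback_input A B K x0) t = traj (A + B ** K) B x0 (\<lambda>_. 0) t"
  by (induction t)
    (simp_all add: feedback_input_def matrix_vector_mult_add_rdistrib matrix_vector_mul_assoc)

lemma feedback_input_iff:
  "(\<forall>t. u t = K *v traj A B x0 u t) \<longleftrightarrow> u = feedback_input A B K x0"
proof
  assume u: "\<forall>t. u t = K *v traj A B x0 u t"
  have "traj A B x0 u t = traj (A + B ** K) B x0 (\<lambda>_. 0) t" for t
  proof (induction t)
    case (Suc t)
    have "traj A B x0 u (Suc t) = A *v traj A B x0 u t + B *v (K *v traj A B x0 u t)"
      by (simp only: traj.simps u[rule_format, of t, symmetric])
    with Suc.IH show ?case
      by (simp add: matrix_vector_mult_add_rdistrib matrix_vector_mul_assoc)
  qed simp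
  then show "u = feedback_input A B K x0" using u by (auto simp: feedback_input_def)
qed (simp add: traj_feedback_input feedback_input_def)

text \<open>N is a right inverse of R + B' P B, so that the Riccati equation and the gain take
 their usual form.\<close>

locale lqr =
  fixes A :: "real^'n::finite^'n" and B :: "real^'m::finite^'n"
    and Q P :: "real^'n^'n" and R :: "real^'m^'m" and K :: "real^'n^'m" and N :: "real^'m^'m"
  assumes Q_pd: "sym_pos_def Q" and R_pd: "sym_pos_def R" and P_pd: "sym_pos_def P"
    and N_inverse: "(R + transpose B ** P ** B) ** N = mat 1"
    and riccati: "P = transpose A ** P ** A + Q - transpose A ** P ** B ** N ** transpose B ** P ** A"
    and gain: "K = - (N ** transpose B ** P ** A)"
begin

definition M where "M = R + transpose B ** P ** B"

definition V where "V x = x \<bullet> (P *v x)"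

lemma P_symmetric: "transpose P = P"
  using P_pd by (simp add: sym_pos_def_def)

lemma M_symmetric: "transpose M = M"
  using R_pd P_symmetric
  by (simp add: M_def sym_pos_def_def transpose_add matrix_transpose_mul matrix_mul_assoc)

lemma M_mult_gain: "M *v (K *v x) = - (transpose B *v (P *v (A *v x)))"
proof -
  define y where "y = transpose B *v (P *v (A *v x))"
  have "K *v x = - (N *v y)"
    by (simp add: gain y_def matrix_vector_mult_uminus flip: matrix_vector_mul_assoc
        del: transpose_matrix_vector)
  then have "M *v (K *v x) = - ((M ** N) *v y)"
    by (simp add: matrix_vector_mult_uminus_right matrix_vector_mul_assoc)
  then show ?thesis by (simp add: M_def N_inverse y_def del: transpose_matrix_vector)
qed

lemma riccati_quadratic_form:
  "V x = V (A *v x) + x \<bullet> (Q *v x) - (K *v x) \<bullet> (M *v (K *v x))"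
proof -
  define y where "y = transpose B *v (P *v (A *v x))"
  have Ny: "N *v y = - (K *v x)"
    by (simp add: gain y_def matrix_vector_mult_uminus flip: matrix_vector_mul_assoc
        del: transpose_matrix_vector)
  have "x \<bullet> (P *v x) = x \<bullet> ((transpose A ** P ** A + Q
      - transpose A ** P ** B ** N ** transpose B ** P ** A) *v x)"
    by (subst riccati) (rule refl)
  also have "\<dots> = (A *v x) \<bullet> (P *v (A *v x)) + x \<bullet> (Q *v x) - (A *v x) \<bullet> (P *v (B *v (N *v y)))"
    by (simp add: y_def matrix_vector_mult_add_rdistrib matrix_vector_mult_diff_rdistrib
        inner_add_right inner_diff_right inner_transpose_matrix_vector
        flip: matrix_vector_mul_assoc del: transpose_matrix_vector)
  also have "(A *v x) \<bullet> (P *v (B *v (N *v y))) = (B *v (N *v y)) \<bullet> (P *v (A *v x))"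
    by (metis inner_commute symmetric_matrix_inner[OF P_symmetric])
  also have "\<dots> = (N *v y) \<bullet> y"
    by (simp only: y_def inner_transpose_matrix_vector)
  also have "\<dots> = (K *v x) \<bullet> (M *v (K *v x))"
    unfolding Ny by (simp add: M_mult_gain y_def del: transpose_matrix_vector)
  finally show ?thesis unfolding V_def .
qed

lemma V_nonneg: "0 \<le> V x"
  unfolding V_def using P_pd by (rule sym_pos_def_psd)

lemma M_psd: "0 \<le> z \<bullet> (M *v z)"
proof -
  have "z \<bullet> (M *v z) = z \<bullet> (R *v z) + V (B *v z)"
    by (simp add: M_def V_def matrix_vector_mult_add_rdistrib inner_add_right
        inner_transpose_matrix_vector flip: matrix_vector_mul_assoc del: transpose_matrix_vector)
  then show ?thesis using R_pd P_pd by (simp add: V_def sym_pos_def_psd)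
qed

lemma completion_of_squares:
  "x \<bullet> (Q *v x) + u \<bullet> (R *v u) + V (A *v x + B *v u) - V x
   = (u - K *v x) \<bullet> (M *v (u - K *v x))"
proof -
  have "(A *v x) \<bullet> (P *v (B *v u)) = (B *v u) \<bullet> (P *v (A *v x))"
    by (metis inner_commute symmetric_matrix_inner[OF P_symmetric])
  then have V_sum: "V (A *v x + B *v u) = V (A *v x) + 2 * ((B *v u) \<bullet> (P *v (A *v x))) + V (B *v u)"
    unfolding V_def matrix_vector_right_distrib inner_add_left inner_add_right by simp
  have Mu: "u \<bullet> (M *v u) = u \<bullet> (R *v u) + V (B *v u)"
    by (simp add: M_def V_def matrix_vector_mult_add_rdistrib inner_add_right
        inner_transpose_matrix_vector flip: matrix_vector_mul_assoc del: transpose_matrix_vector)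
  have cross: "u \<bullet> (M *v (K *v x)) = - ((B *v u) \<bullet> (P *v (A *v x)))"
    by (simp add: M_mult_gain inner_transpose_matrix_vector del: transpose_matrix_vector)
  have "(u - K *v x) \<bullet> (M *v (u - K *v x))
      = u \<bullet> (M *v u) - 2 * (u \<bullet> (M *v (K *v x))) + (K *v x) \<bullet> (M *v (K *v x))"
    using symmetric_matrix_inner[OF M_symmetric, of "K *v x" u] inner_commute[of "M *v (K *v x)" u]
    by (simp add: matrix_vector_mult_diff_distrib inner_diff_left inner_diff_right)
  then show ?thesis using riccati_quadratic_form[of x] V_sum Mu cross by linarith
qed

lemma stage_cost_telescope:
  "(\<Sum>t<n. stage_cost A B Q R x0 u t) = V x0 - V (traj A B x0 u n)
     + (\<Sum>t<n. (u t - K *v traj A B x0 u t) \<bullet> (M *v (u t - K *v traj A B x0 u t)))"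
proof (induction n)
  case (Suc n)
  then show ?case
    using completion_of_squares[of "traj A B x0 u n" "u n"] by (simp add: stage_cost_def)
qed simp

lemma V_le_suminf_stage_cost:
  assumes summable: "summable (stage_cost A B Q R x0 u)"
  shows "V x0 \<le> suminf (stage_cost A B Q R x0 u)"
proof -
  define c where "c = sigma_max P / sigma_min Q"
  \<comment> \<open>the terms of a convergent cost series tend to 0, and they dominate V(x(t))\<close>
  have V_le: "V (traj A B x0 u t) \<le> c * stage_cost A B Q R x0 u t" for t
  proof -
    define x where "x = traj A B x0 u t"
    have "sigma_min Q * (norm x)\<^sup>2 \<le> stage_cost A B Q R x0 u t"
      using sigma_min_symmetric(2)[of Q x] Q_pd sym_pos_def_psd[OF R_pd, of "u t"]
      by (simp add: stage_cost_def x_def sym_pos_def_def)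
    then have "sigma_max P * (norm x)\<^sup>2 \<le> c * stage_cost A B Q R x0 u t"
      using sigma_min_pos[OF Q_pd] sigma_max_pos[OF P_pd] by (simp add: c_def field_simps)
    moreover have "V x \<le> sigma_max P * (norm x)\<^sup>2"
      unfolding V_def by (rule sigma_max_symmetric(2)[OF P_symmetric])
    ultimately show ?thesis unfolding x_def by linarith
  qed
  have lim: "(\<lambda>t. c * stage_cost A B Q R x0 u t) \<longlonglongrightarrow> 0"
    using tendsto_mult[OF tendsto_const summable_LIMSEQ_zero[OF summable], of c] by simp
  have "(\<lambda>t. V (traj A B x0 u t)) \<longlonglongrightarrow> 0"
    by (rule real_tendsto_sandwich[OF _ _ tendsto_const lim]) (use V_le V_nonneg in auto)
  then have "(\<lambda>n. V x0 - V (traj A B x0 u n)) \<longlonglongrightarrow> V x0"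
    using tendsto_diff[OF tendsto_const, of _ 0 _ "V x0"] by simp
  moreover have "V x0 - V (traj A B x0 u n) \<le> (\<Sum>t<n. stage_cost A B Q R x0 u t)" for n
    unfolding stage_cost_telescope using M_psd by (simp add: sum_nonneg)
  ultimately show ?thesis
    using LIMSEQ_le[OF _ summable_LIMSEQ[OF summable]] by blast
qed

lemma feedback_cost_sum:
  "(\<Sum>t<n. stage_cost A B Q R x0 (feedback_input A B K x0) t)
   = V x0 - V (traj A B x0 (feedback_input A B K x0) n)"
  unfolding stage_cost_telescope by (simp add: traj_feedback_input feedback_input_def)

lemma V_feedback_traj_le: "V (traj A B x0 (feedback_input A B K x0) n) \<le> V x0"
proof -
  have "0 \<le> (\<Sum>t<n. stage_cost A B Q R x0 (feedback_input A B K x0) t)"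
    by (rule sum_nonneg) (rule stage_cost_nonneg[OF Q_pd R_pd])
  then show ?thesis unfolding feedback_cost_sum by simp
qed

lemma summable_feedback_cost: "summable (stage_cost A B Q R x0 (feedback_input A B K x0))"
  by (rule summableI_nonneg_bounded[where x = "V x0"])
    (use stage_cost_nonneg[OF Q_pd R_pd] feedback_cost_sum V_nonneg in auto)

lemma suminf_feedback_cost: "suminf (stage_cost A B Q R x0 (feedback_input A B K x0)) = V x0"
proof (rule antisym)
  show "suminf (stage_cost A B Q R x0 (feedback_input A B K x0)) \<le> V x0"
    by (rule suminf_le_const[OF summable_feedback_cost])
      (use feedback_cost_sum V_nonneg in auto)
qed (rule V_le_suminf_stage_cost[OF summable_feedback_cost])

lemma feedback_cost_minimal:
  "summable (stage_cost A B Q R x0 u) \<Longrightarrow>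
   suminf (stage_cost A B Q R x0 (feedback_input A B K x0)) \<le> suminf (stage_cost A B Q R x0 u)"
  unfolding suminf_feedback_cost by (rule V_le_suminf_stage_cost)

lemma feedback_consumption_le:
  assumes H: "transpose H = H" and C: "0 \<le> C"
    and x0: "(norm x0)\<^sup>2 \<le> C * sigma_min P / (sigma_max P * sigma_max (transpose K ** H ** K))"
  shows "feedback_input A B K x0 t \<bullet> (H *v feedback_input A B K x0 t) \<le> C"
proof -
  define x where "x = traj A B x0 (feedback_input A B K x0) t"
  define s where "s = sigma_max (transpose K ** H ** K)"
  have "transpose (transpose K ** H ** K) = transpose K ** H ** K"
    using H by (simp add: matrix_transpose_mul matrix_mul_assoc)
  then have "x \<bullet> ((transpose K ** H ** K) *v x) \<le> s * (norm x)\<^sup>2"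
    unfolding s_def by (rule sigma_max_symmetric(2))
  moreover have "feedback_input A B K x0 t = K *v x"
    by (simp add: x_def traj_feedback_input feedback_input_def)
  ultimately have consumption:
      "feedback_input A B K x0 t \<bullet> (H *v feedback_input A B K x0 t) \<le> s * (norm x)\<^sup>2"
    by (simp add: inner_transpose_matrix_vector flip: matrix_vector_mul_assoc
        del: transpose_matrix_vector)
  show ?thesis
  proof (cases "s \<le> 0")
    case True
    then have "s * (norm x)\<^sup>2 \<le> 0" by (simp add: mult_nonpos_nonneg)
    then show ?thesis using consumption C by linarith
  next
    case False
    have pm: "0 < sigma_min P" "0 < sigma_max P"
      using sigma_min_pos[OF P_pd] sigma_max_pos[OF P_pd] by auto
    have "sigma_min P * (norm x)\<^sup>2 \<le> V x"
      unfolding V_def by (rule sigma_min_symmetric(2)[OF P_symmetric])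
    also have "\<dots> \<le> V x0" unfolding x_def by (rule V_feedback_traj_le)
    also have "\<dots> \<le> sigma_max P * (norm x0)\<^sup>2"
      unfolding V_def by (rule sigma_max_symmetric(2)[OF P_symmetric])
    also have "\<dots> \<le> sigma_max P * (C * sigma_min P / (sigma_max P * s))"
      using mult_left_mono[OF x0, of "sigma_max P"] pm by (simp add: s_def)
    also have "\<dots> = sigma_min P * (C / s)" using pm by simp
    finally have "(norm x)\<^sup>2 \<le> C / s" using pm(1) by (rule mult_left_le_imp_le)
    then have "s * (norm x)\<^sup>2 \<le> C" using False by (simp add: field_simps)
    then show ?thesis using consumption by linarith
  qed
qed

end

lemma lqr_of_riccati:
  assumes Q: "sym_pos_def Q" and R: "sym_pos_def R" and P: "sym_pos_def P"
    and riccati: "P = transpose A ** P ** A + Q - transpose A ** P ** B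
        ** matrix_inv (transpose B ** P ** B + R) ** transpose B ** P ** A"
    and gain: "K = - (matrix_inv (R + transpose B ** P ** B) ** transpose B ** P ** A)"
  shows "lqr A B Q P R K (matrix_inv (R + transpose B ** P ** B))"
proof -
  define M where "M = R + transpose B ** P ** B"
  have "0 < z \<bullet> (M *v z)" if "z \<noteq> 0" for z
  proof -
    have "z \<bullet> (M *v z) = z \<bullet> (R *v z) + (B *v z) \<bullet> (P *v (B *v z))"
      by (simp add: M_def matrix_vector_mult_add_rdistrib inner_add_right
          inner_transpose_matrix_vector flip: matrix_vector_mul_assoc del: transpose_matrix_vector)
    then show ?thesis
      using R that sym_pos_def_psd[OF P, of "B *v z"] by (simp add: sym_pos_def_def add_pos_nonneg)
  qed
  then have "\<exists>M'. M' ** M = mat 1"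
    unfolding matrix_left_invertible_ker by (metis inner_zero_right less_irrefl)
  then have "invertible M" by (simp add: invertible_left_inverse)
  then have "M ** matrix_inv M = mat 1"
    unfolding matrix_inv_def invertible_def by (rule someI2_ex) blast
  then show ?thesis
    unfolding lqr_def using Q R P riccati gain by (simp add: M_def add.commute)
qed

section \<open>Social welfare and competitive equilibrium\<close>

lemma stage_cost_blockdiag:
  "stage_cost (blockdiag A) (blockdiag B) (blockdiag Q) (blockdiag R) x0 u t
   = (\<Sum>i\<in>UNIV. stage_cost (A i) (B i) (Q i) (R i) (comp x0 i) (\<lambda>t. comp (u t) i) t)"
  by (simp add: stage_cost_def inner_blockdiag comp_traj_blockdiag sum.distrib)

lemma swm_stage_eq_stage_cost:
  "swm_stage Ai Bi Qi Ri x0 u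
   = (\<lambda>t. - stage_cost (blockdiag Ai) (blockdiag Bi) (blockdiag Qi) (blockdiag Ri) x0 u t)"
  unfolding fun_eq_iff swm_stage_def stage_cost_blockdiag
  by (simp add: util_def stage_cost_def comp_traj_blockdiag flip: sum_negf)

lemma agent_stage_zero_price: "agent_stage A B Q R xi0 (\<lambda>_. 0) u e = (\<lambda>t. - stage_cost A B Q R xi0 u t)"
  by (simp add: fun_eq_iff agent_stage_def util_def stage_cost_def)

lemma sum_cons_blockdiag: "(\<Sum>i\<in>UNIV. cons (Hi i) (comp v i)) = v \<bullet> (blockdiag Hi *v v)"
  by (simp add: cons_def inner_blockdiag)

lemma swm_admissible_equal_split:
  fixes Hi :: "'i::finite \<Rightarrow> real^'c::finite^'c"
  assumes "\<And>t. (\<Sum>i\<in>UNIV. cons (Hi i) (comp (u t) i)) \<le> (\<Sum>i\<in>UNIV. a i t)"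
  shows "swm_admissible Hi a u (\<lambda>i t. a i t - cons (Hi i) (comp (u t) i)
           - (\<Sum>j\<in>UNIV. a j t - cons (Hi j) (comp (u t) j)) / real CARD('i))"
  using assms by (simp add: swm_admissible_def sum_subtractf)

lemma swm_optimal_input_if_cost_minimal:
  assumes Q: "\<And>i. sym_pos_def (Qi i)" and R: "\<And>i. sym_pos_def (Ri i)"
    and admissible: "swm_admissible Hi a u e"
    and summable: "summable (stage_cost (blockdiag Ai) (blockdiag Bi) (blockdiag Qi) (blockdiag Ri) x0 u)"
    and minimal: "\<And>u'. summable (stage_cost (blockdiag Ai) (blockdiag Bi) (blockdiag Qi) (blockdiag Ri) x0 u')
      \<Longrightarrow> suminf (stage_cost (blockdiag Ai) (blockdiag Bi) (blockdiag Qi) (blockdiag Ri) x0 u)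
          \<le> suminf (stage_cost (blockdiag Ai) (blockdiag Bi) (blockdiag Qi) (blockdiag Ri) x0 u')"
  shows "swm_optimal_input Ai Bi Qi Ri Hi a x0 u \<and> swm_feasible Ai Bi Qi Ri Hi a x0"
proof -
  have upper: "series_val (swm_stage Ai Bi Qi Ri x0 u') \<le> ereal (suminf (swm_stage Ai Bi Qi Ri x0 u))"
    for u'
    unfolding swm_stage_eq_stage_cost suminf_minus[OF summable]
    by (rule series_val_uminus_le[OF stage_cost_nonneg minimal])
      (use sym_pos_def_blockdiag Q R in blast)+
  have "summable (swm_stage Ai Bi Qi Ri x0 u)"
    unfolding swm_stage_eq_stage_cost by (rule summable_minus[OF summable])
  then have optimal_value: "swm_value Ai Bi Qi Ri Hi a x0 = ereal (suminf (swm_stage Ai Bi Qi Ri x0 u))"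
    unfolding swm_value_def using admissible upper series_val_eq_suminf
    by (intro antisym SUP_least) (auto intro!: SUP_upper2[of "(u, e)"])
  show ?thesis
    unfolding swm_optimal_input_def swm_feasible_def optimal_value
    using admissible upper \<open>summable (swm_stage Ai Bi Qi Ri x0 u)\<close> by auto
qed

lemma agent_optimal_zero_price_if_cost_minimal:
  assumes Q: "sym_pos_def Q" and R: "sym_pos_def R" and feasible: "agent_feasible H ai ui ei"
    and summable: "summable (stage_cost A B Q R xi0 ui)"
    and minimal: "\<And>w. summable (stage_cost A B Q R xi0 w)
      \<Longrightarrow> suminf (stage_cost A B Q R xi0 ui) \<le> suminf (stage_cost A B Q R xi0 w)"
  shows "agent_optimal A B Q R H ai xi0 (\<lambda>_. 0) ui ei"
  unfolding agent_optimal_def agent_stage_zero_price suminf_minus[OF summable]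
  using feasible summable_minus[OF summable]
    series_val_uminus_le[OF stage_cost_nonneg[OF Q R] minimal] by blast

text \<open>Dynamics and costs decouple across agents: if agent i could lower its own cost, replacing
 its component of u would lower the social cost.\<close>

lemma agent_cost_minimal_if_social_cost_minimal:
  fixes Ai :: "'i::finite \<Rightarrow> real^'d::finite^'d" and Bi :: "'i \<Rightarrow> real^'c::finite^'d"
  assumes Q: "\<And>i. sym_pos_def (Qi i)" and R: "\<And>i. sym_pos_def (Ri i)"
    and summable: "summable (stage_cost (blockdiag Ai) (blockdiag Bi) (blockdiag Qi) (blockdiag Ri) x0 u)"
    and minimal: "\<And>u'. summable (stage_cost (blockdiag Ai) (blockdiag Bi) (blockdiag Qi) (blockdiag Ri) x0 u')
      \<Longrightarrow> suminf (stage_cost (blockdiag Ai) (blockdiag Bi) (blockdiag Qi) (blockdiag Ri) x0 u)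
          \<le> suminf (stage_cost (blockdiag Ai) (blockdiag Bi) (blockdiag Qi) (blockdiag Ri) x0 u')"
  shows "summable (stage_cost (Ai i) (Bi i) (Qi i) (Ri i) (comp x0 i) (\<lambda>t. comp (u t) i))"
    and "summable (stage_cost (Ai i) (Bi i) (Qi i) (Ri i) (comp x0 i) w) \<Longrightarrow>
      suminf (stage_cost (Ai i) (Bi i) (Qi i) (Ri i) (comp x0 i) (\<lambda>t. comp (u t) i))
      \<le> suminf (stage_cost (Ai i) (Bi i) (Qi i) (Ri i) (comp x0 i) w)"
proof -
  let ?c = "stage_cost (blockdiag Ai) (blockdiag Bi) (blockdiag Qi) (blockdiag Ri) x0"
  define c where "c j w = stage_cost (Ai j) (Bi j) (Qi j) (Ri j) (comp x0 j) w" for j w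
  have c_nonneg: "0 \<le> c j w t" for j w t
    unfolding c_def by (rule stage_cost_nonneg[OF Q R])
  have c_le: "c i (\<lambda>t. comp (u t) i) t \<le> ?c u t" for t
    unfolding stage_cost_blockdiag c_def[symmetric] by (rule member_le_sum) (auto intro: c_nonneg)
  show summable_i: "summable (c i (\<lambda>t. comp (u t) i))"
    by (rule summable_comparison_test[OF _ summable]) (use c_nonneg c_le in auto)
  assume summable_w: "summable (c i w)"
  define u' where "u' t = (\<chi> p. if fst p = i then w t $ snd p else u t $ p)" for t
  have comp_u': "(\<lambda>t. comp (u' t) j) = (if j = i then w else (\<lambda>t. comp (u t) j))" for j
    by (auto simp: u'_def comp_def vec_eq_iff)
  have "?c u' t = ?c u t + (c i w t - c i (\<lambda>t. comp (u t) i) t)" for t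
  proof -
    have "?c u' t = (\<Sum>j\<in>UNIV. c j (\<lambda>t. comp (u t) j) t
        + (if j = i then c i w t - c i (\<lambda>t. comp (u t) i) t else 0))"
      unfolding stage_cost_blockdiag c_def[symmetric] comp_u' by (intro sum.cong) auto
    then show ?thesis unfolding sum.distrib stage_cost_blockdiag c_def[symmetric] by simp
  qed
  then have c_u': "?c u' = (\<lambda>t. ?c u t + (c i w t - c i (\<lambda>t. comp (u t) i) t))"
    by (rule ext)
  have summable_diff: "summable (\<lambda>t. c i w t - c i (\<lambda>t. comp (u t) i) t)"
    by (rule summable_diff[OF summable_w summable_i])
  have "suminf (?c u) \<le> suminf (?c u')"
    by (rule minimal) (unfold c_u', rule summable_add[OF summable summable_diff])
  also have "\<dots> = suminf (?c u) + (suminf (c i w) - suminf (c i (\<lambda>t. comp (u t) i)))"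
    unfolding c_u' suminf_add[OF summable summable_diff, symmetric]
      suminf_diff[OF summable_w summable_i] ..
  finally show "suminf (c i (\<lambda>t. comp (u t) i)) \<le> suminf (c i w)" by simp
qed

lemma competitive_equilibrium_zero_price_if_social_cost_minimal:
  assumes Q: "\<And>i. sym_pos_def (Qi i)" and R: "\<And>i. sym_pos_def (Ri i)"
    and admissible: "swm_admissible Hi a u E"
    and summable: "summable (stage_cost (blockdiag Ai) (blockdiag Bi) (blockdiag Qi) (blockdiag Ri) x0 u)"
    and minimal: "\<And>u'. summable (stage_cost (blockdiag Ai) (blockdiag Bi) (blockdiag Qi) (blockdiag Ri) x0 u')
      \<Longrightarrow> suminf (stage_cost (blockdiag Ai) (blockdiag Bi) (blockdiag Qi) (blockdiag Ri) x0 u)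
          \<le> suminf (stage_cost (blockdiag Ai) (blockdiag Bi) (blockdiag Qi) (blockdiag Ri) x0 u')"
  shows "competitive_equilibrium Ai Bi Qi Ri Hi a x0 (\<lambda>_. 0) (\<lambda>i t. comp (u t) i) E"
proof -
  let ?c = "\<lambda>i. stage_cost (Ai i) (Bi i) (Qi i) (Ri i) (comp x0 i)"
  have own_summable: "summable (?c i (\<lambda>t. comp (u t) i))" for i
    by (rule agent_cost_minimal_if_social_cost_minimal(1)[OF Q R summable minimal])
  have own_minimal: "suminf (?c i (\<lambda>t. comp (u t) i)) \<le> suminf (?c i w)"
    if "summable (?c i w)" for i w
    by (rule agent_cost_minimal_if_social_cost_minimal(2)[OF Q R summable minimal that])
  have "agent_feasible (Hi i) (a i) (\<lambda>t. comp (u t) i) (E i)" for i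
    using admissible by (simp add: swm_admissible_def agent_feasible_def)
  then have "agent_optimal (Ai i) (Bi i) (Qi i) (Ri i) (Hi i) (a i) (comp x0 i) (\<lambda>_. 0)
      (\<lambda>t. comp (u t) i) (E i)" for i
    by (rule agent_optimal_zero_price_if_cost_minimal[OF Q R _ own_summable own_minimal])
  then show ?thesis
    using admissible by (simp add: competitive_equilibrium_def swm_admissible_def)
qed

theorem theorem9:
  fixes Ai :: "'i::finite \<Rightarrow> real^'d::finite^'d"
    and Bi :: "'i \<Rightarrow> real^'c::finite^'d"
    and Qi :: "'i \<Rightarrow> real^'d^'d"
    and Ri :: "'i \<Rightarrow> real^'c^'c"
    and Hi :: "'i \<Rightarrow> real^'c^'c"
    and a :: "'i \<Rightarrow> nat \<Rightarrow> real"
    and C :: real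
    and P :: "real^('i \<times> 'd)^('i \<times> 'd)"
    and K :: "real^('i \<times> 'd)^('i \<times> 'c)"
    and x0 :: "real^('i \<times> 'd)"
  assumes Q_pd: "\<And>i. sym_pos_def (Qi i)"
    and R_pd: "\<And>i. sym_pos_def (Ri i)"
    and H_pd: "\<And>i. sym_pos_def (Hi i)"
    and ctrb: "controllable (blockdiag Ai) (blockdiag Bi)"
    and C_pos: "C > 0"
    and C_lb: "\<And>t. (\<Sum>i\<in>UNIV. a i t) \<ge> C"
    and P_pd: "sym_pos_def P"
    and DARE: "P = transpose (blockdiag Ai) ** P ** blockdiag Ai + blockdiag Qi
                 - transpose (blockdiag Ai) ** P ** blockdiag Bi
                   ** matrix_inv (transpose (blockdiag Bi) ** P ** blockdiag Bi + blockdiag Ri)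
                   ** transpose (blockdiag Bi) ** P ** blockdiag Ai"
    and K_def: "K = - (matrix_inv (blockdiag Ri + transpose (blockdiag Bi) ** P ** blockdiag Bi)
                   ** transpose (blockdiag Bi) ** P ** blockdiag Ai)"
    and KHK: "transpose K ** blockdiag Hi ** K \<noteq> 0"
    and x0_X0: "(norm x0)\<^sup>2 \<le> C * sigma_min P
                  / (sigma_max P * sigma_max (transpose K ** blockdiag Hi ** K))"
  shows "swm_feasible Ai Bi Qi Ri Hi a x0
         \<and> (\<forall>u. (\<forall>t. u t = K *v traj (blockdiag Ai) (blockdiag Bi) x0 u t)
               \<longrightarrow> swm_optimal_input Ai Bi Qi Ri Hi a x0 u)
         \<and> (\<exists>U E. competitive_equilibrium Ai Bi Qi Ri Hi a x0 (\<lambda>t. 0) U E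
               \<and> (\<forall>u. (\<forall>t. u t = K *v traj (blockdiag Ai) (blockdiag Bi) x0 u t)
                     \<longrightarrow> (\<forall>i t. U i t = comp (u t) i)))"
proof -
  \<comment> \<open>Controllability and K' H K \<noteq> 0 are what guarantee that the stabilizing P exists and that
   X_0 is well defined.\<close>
  interpret LQ: lqr "blockdiag Ai" "blockdiag Bi" "blockdiag Qi" P "blockdiag Ri" K
      "matrix_inv (blockdiag Ri + transpose (blockdiag Bi) ** P ** blockdiag Bi)"
    by (rule lqr_of_riccati[OF sym_pos_def_blockdiag[OF Q_pd] sym_pos_def_blockdiag[OF R_pd]
          P_pd DARE K_def])
  define u where "u = feedback_input (blockdiag Ai) (blockdiag Bi) K x0"
  have "sym_pos_def (blockdiag Hi)" by (rule sym_pos_def_blockdiag[OF H_pd])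
  then have "transpose (blockdiag Hi) = blockdiag Hi" by (simp add: sym_pos_def_def)
  from LQ.feedback_consumption_le[OF this _ x0_X0] C_pos C_lb
  have "(\<Sum>i\<in>UNIV. cons (Hi i) (comp (u t) i)) \<le> (\<Sum>i\<in>UNIV. a i t)" for t
    unfolding sum_cons_blockdiag u_def by (meson less_imp_le order_trans)
  then obtain E where E: "swm_admissible Hi a u E"
    using swm_admissible_equal_split by blast
  note social_optimum = LQ.summable_feedback_cost[of x0, folded u_def]
    LQ.feedback_cost_minimal[of x0, folded u_def]
  have "swm_optimal_input Ai Bi Qi Ri Hi a x0 u \<and> swm_feasible Ai Bi Qi Ri Hi a x0"
    by (rule swm_optimal_input_if_cost_minimal[OF Q_pd R_pd E social_optimum])
  moreover have "competitive_equilibrium Ai Bi Qi Ri Hi a x0 (\<lambda>_. 0) (\<lambda>i t. comp (u t) i) E"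
    by (rule competitive_equilibrium_zero_price_if_social_cost_minimal[OF Q_pd R_pd E social_optimum])
  ultimately show ?thesis
    by (auto simp: feedback_input_iff u_def)
qed

end
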